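(* Let $(S,\mu)$ be a complete, $\sigma$-finite positive measure space and let $X$ be a Banach space whose norm is Fréchet differentiable. A non-zero $f\in L^1(\mu,X)$ is approximately smooth if and only if $f(s)\neq 0$ for $\mu$-almost every $s\in S$.
   Context: $L^1(\mu,X)$ is the Lebesgue–Bochner space of (classes of a.e. equal) strongly measurable $f:S\to X$ with $\|f\|=\int_S\|f(s)\|\,d\mu(s)<\infty$. For a non-zero $x$ in a normed space $Y$, $J(x)$ denotes the set of support functionals at $x$, i.e. norm-one $F\in Y^*$ with $F(x)=\|x\|$; $x$ is approximately smooth if $\operatorname{diam}J(x)=\sup\{\|F-G\|:F,G\in J(x)\}<2$. The norm of $X$ is Fréchet differentiable if for every non-zero $x\in X$ there is $\varphi\in X^*$ with $\lim_{h\to0}\big|\|x+h\|-\|x\|-\varphi(h)\big|/\|h\|=0$. *)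

theory Defs
  imports "HOL-Analysis.Analysis"
begin

definition strongly_measurable :: "'a measure \<Rightarrow> ('a \<Rightarrow> 'b::real_normed_vector) \<Rightarrow> bool" where
  "strongly_measurable M f \<longleftrightarrow>
     (\<exists>u :: nat \<Rightarrow> 'a \<Rightarrow> 'b. (\<forall>n. simple_function M (u n)) \<and>
        (AE s in M. (\<lambda>n. u n s) \<longlonglongrightarrow> f s))"

text \<open>The Lebesgue--Bochner L1 norm and membership in L1(mu, X)
  (elements are represented by functions; a.e.-equal ones have distance 0).\<close>
definition L1_norm :: "'a measure \<Rightarrow> ('a \<Rightarrow> 'b::real_normed_vector) \<Rightarrow> real" where
  "L1_norm M f = enn2real (\<integral>\<^sup>+ s. ennreal (norm (f s)) \<partial>M)"

definition L1 :: "'a measure \<Rightarrow> ('a \<Rightarrow> 'b::real_normed_vector) \<Rightarrow> bool" where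
  "L1 M f \<longleftrightarrow> strongly_measurable M f \<and> (\<integral>\<^sup>+ s. ennreal (norm (f s)) \<partial>M) < \<infinity>"

text \<open>Continuous linear functionals on L1(mu, X) (only their values on L1 matter).\<close>
definition L1_dual :: "'a measure \<Rightarrow> ((('a \<Rightarrow> 'b::real_normed_vector) \<Rightarrow> real) set)" where
  "L1_dual M = {F. (\<forall>g h. L1 M g \<longrightarrow> L1 M h \<longrightarrow> F (\<lambda>s. g s + h s) = F g + F h) \<and>
                   (\<forall>c g. L1 M g \<longrightarrow> F (\<lambda>s. c *\<^sub>R g s) = c * F g) \<and>
                   (\<exists>K. \<forall>g. L1 M g \<longrightarrow> \<bar>F g\<bar> \<le> K * L1_norm M g)}"

definition L1_dual_norm :: "'a measure \<Rightarrow> (('a \<Rightarrow> 'b::real_normed_vector) \<Rightarrow> real) \<Rightarrow> real" where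
  "L1_dual_norm M F = (SUP g\<in>{g. L1 M g \<and> L1_norm M g \<le> 1}. \<bar>F g\<bar>)"

definition support_functionals :: "'a measure \<Rightarrow> ('a \<Rightarrow> 'b::real_normed_vector) \<Rightarrow> (('a \<Rightarrow> 'b) \<Rightarrow> real) set" where
  "support_functionals M f =
     {F \<in> L1_dual M. L1_dual_norm M F = 1 \<and> F f = L1_norm M f}"

definition diam_J :: "'a measure \<Rightarrow> ('a \<Rightarrow> 'b::real_normed_vector) \<Rightarrow> real" where
  "diam_J M f = (SUP (F, G) \<in> support_functionals M f \<times> support_functionals M f.
                   L1_dual_norm M (\<lambda>g. F g - G g))"

definition approx_smooth_L1 :: "'a measure \<Rightarrow> ('a \<Rightarrow> 'b::real_normed_vector) \<Rightarrow> bool" where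
  "approx_smooth_L1 M f \<longleftrightarrow> L1_norm M f \<noteq> 0 \<and> diam_J M f < 2"

definition frechet_smooth_norm :: "'b::real_normed_vector itself \<Rightarrow> bool" where
  "frechet_smooth_norm _ \<longleftrightarrow> (\<forall>x::'b. x \<noteq> 0 \<longrightarrow> (\<exists>\<phi>. (norm has_derivative \<phi>) (at x)))"

end

theory Submission
  imports Defs
begin

text \<open>Let D x be the derivative of the norm of X at x. For a support functional F at f and
  g in L1, F g \<le> n (\<parallel>f + g/n\<parallel> - \<parallel>f\<parallel>) for every n, and when f is non-zero almost everywhere the
  right-hand side tends to \<integral> D(f s)(g s) by dominated convergence. Applied to g and -g this
  shows that J(f) consists of the single functional g \<mapsto> \<integral> D(f s)(g s), so diam J(f) = 0.
  If instead f vanishes on a set A of positive measure, which by \<sigma>-finiteness can be taken of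
  finite measure, then adding \<plusminus>D x on A (for any x \<noteq> 0) to the integrand gives two support
  functionals at f that differ by 2 on the normalised indicator of A times x, so
  diam J(f) \<ge> 2.\<close>

section \<open>Strong measurability and L1\<close>

lemma (in complete_measure) borel_measurable_AE_eq:
  assumes "g \<in> borel_measurable M" and "AE s in M. f s = g s"
  shows "f \<in> borel_measurable M"
proof (rule measurableI)
  fix A :: "'b set" assume "A \<in> sets borel"
  then have "g -` A \<inter> space M \<in> sets M"
    by (rule measurable_sets[OF assms(1)])
  then show "f -` A \<inter> space M \<in> sets M"
    by (rule in_sets_AE[rotated]) (use assms(2) in \<open>auto elim: eventually_mono\<close>)
qed auto

lemma borel_measurable_strongly_measurable:
  fixes g :: "'a \<Rightarrow> 'b::real_normed_vector"
  assumes "complete_measure M" and "strongly_measurable M g"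
  shows "g \<in> borel_measurable M"
proof -
  interpret complete_measure M by fact
  obtain u where u: "\<And>n. simple_function M (u n)" and ae: "AE s in M. (\<lambda>n. u n s) \<longlonglongrightarrow> g s"
    using assms(2) unfolding strongly_measurable_def by blast
  define N where "N = {s\<in>space M. \<not> (\<lambda>n. u n s) \<longlonglongrightarrow> g s}"
  have "N \<in> null_sets M"
    using ae unfolding N_def AE_iff_null_sets .
  then have N: "N \<in> sets M" "AE s in M. s \<notin> N"
    by (auto intro: AE_not_in)
  define g' where "g' s = (if s \<in> N then 0 else g s)" for s
  have "g' \<in> borel_measurable M"
  proof (rule borel_measurable_LIMSEQ_metric)
    show "(\<lambda>s. if s \<in> N then 0 else u n s) \<in> borel_measurable M" for n
      by (rule measurable_If_set) (use u borel_measurable_simple_function N in auto)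
    show "(\<lambda>n. if s \<in> N then 0 else u n s) \<longlonglongrightarrow> g' s" if "s \<in> space M" for s
      using that unfolding g'_def N_def by auto
  qed
  moreover have "AE s in M. g s = g' s"
    using N(2) by eventually_elim (simp add: g'_def)
  ultimately show ?thesis
    by (rule borel_measurable_AE_eq)
qed

lemma strongly_measurable_simple_function:
  "simple_function M g \<Longrightarrow> strongly_measurable M g"
  unfolding strongly_measurable_def by (intro exI[of _ "\<lambda>n. g"]) auto

lemma strongly_measurable_add_scaleR:
  fixes f g :: "'a \<Rightarrow> 'b::real_normed_vector"
  assumes "strongly_measurable M f" and "strongly_measurable M g"
  shows "strongly_measurable M (\<lambda>s. f s + c *\<^sub>R g s)"
proof -
  obtain u where u: "\<And>n. simple_function M (u n)" and lim_u: "AE s in M. (\<lambda>n. u n s) \<longlonglongrightarrow> f s"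
    using assms(1) unfolding strongly_measurable_def by blast
  obtain v where v: "\<And>n. simple_function M (v n)" and lim_v: "AE s in M. (\<lambda>n. v n s) \<longlonglongrightarrow> g s"
    using assms(2) unfolding strongly_measurable_def by blast
  have "simple_function M (\<lambda>s. u n s + c *\<^sub>R v n s)" for n
    using simple_function_compose2[OF u v, of "\<lambda>a b. a + c *\<^sub>R b"] by simp
  moreover have "AE s in M. (\<lambda>n. u n s + c *\<^sub>R v n s) \<longlonglongrightarrow> f s + c *\<^sub>R g s"
    using lim_u lim_v by eventually_elim (intro tendsto_intros)
  ultimately show ?thesis
    unfolding strongly_measurable_def by (intro exI[of _ "\<lambda>n s. u n s + c *\<^sub>R v n s"]) simp
qed

lemma L1_norm_nonneg: "L1_norm M g \<ge> 0"
  unfolding L1_norm_def by simp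

lemma L1_zero: "L1 M (\<lambda>s. 0)"
  unfolding L1_def by (simp add: strongly_measurable_simple_function)

lemma L1_norm_zero: "L1_norm M (\<lambda>s. 0) = 0"
  unfolding L1_norm_def by simp

lemma
  fixes g :: "'a \<Rightarrow> 'b::real_normed_vector"
  assumes "complete_measure M" and "L1 M g"
  shows integrable_norm_L1: "integrable M (\<lambda>s. norm (g s))"
    and L1_norm_eq_integral: "L1_norm M g = (\<integral>s. norm (g s) \<partial>M)"
proof -
  have "g \<in> borel_measurable M"
    using assms borel_measurable_strongly_measurable unfolding L1_def by blast
  then have meas: "(\<lambda>s. norm (g s)) \<in> borel_measurable M"
    by measurable
  show "integrable M (\<lambda>s. norm (g s))"
    using meas assms(2) unfolding L1_def by (intro integrableI_bounded) auto
  show "L1_norm M g = (\<integral>s. norm (g s) \<partial>M)"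
    unfolding L1_norm_def using meas by (subst integral_eq_nn_integral) auto
qed

lemma L1_add_scaleR:
  fixes f g :: "'a \<Rightarrow> 'b::real_normed_vector"
  assumes "complete_measure M" and "L1 M f" and "L1 M g"
  shows "L1 M (\<lambda>s. f s + c *\<^sub>R g s)"
proof -
  have sm: "strongly_measurable M (\<lambda>s. f s + c *\<^sub>R g s)"
    using strongly_measurable_add_scaleR assms(2,3) unfolding L1_def by blast
  then have "(\<lambda>s. f s + c *\<^sub>R g s) \<in> borel_measurable M"
    by (rule borel_measurable_strongly_measurable[OF assms(1)])
  then have meas: "(\<lambda>s. norm (f s + c *\<^sub>R g s)) \<in> borel_measurable M"
    by measurable
  have "integrable M (\<lambda>s. norm (f s) + \<bar>c\<bar> * norm (g s))"
    using integrable_norm_L1[OF assms(1,2)] integrable_norm_L1[OF assms(1,3)] by auto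
  then have "integrable M (\<lambda>s. norm (f s + c *\<^sub>R g s))"
    by (rule Bochner_Integration.integrable_bound)
       (use meas in \<open>auto intro!: order_trans[OF norm_triangle_ineq]\<close>)
  with sm show ?thesis
    unfolding L1_def integrable_iff_bounded by simp
qed

lemma L1_scaleR:
  fixes g :: "'a \<Rightarrow> 'b::real_normed_vector"
  assumes "complete_measure M" and "L1 M g"
  shows "L1 M (\<lambda>s. c *\<^sub>R g s)"
  using L1_add_scaleR[OF assms(1) L1_zero assms(2)] by simp

lemma L1_norm_scaleR:
  fixes g :: "'a \<Rightarrow> 'b::real_normed_vector"
  assumes "complete_measure M" and "L1 M g"
  shows "L1_norm M (\<lambda>s. c *\<^sub>R g s) = \<bar>c\<bar> * L1_norm M g"
  using assms L1_scaleR[OF assms] by (simp add: L1_norm_eq_integral)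

lemma
  fixes v :: "'b::real_normed_vector"
  assumes "A \<in> sets M" and "emeasure M A < \<infinity>"
  shows L1_indicator_scaleR: "L1 M (\<lambda>s. indicator A s *\<^sub>R v)"
    and L1_norm_indicator_scaleR: "L1_norm M (\<lambda>s. indicator A s *\<^sub>R v) = norm v * measure M A"
proof -
  have "simple_function M (\<lambda>s. indicator A s *\<^sub>R v)"
    using assms(1) by (intro simple_function_compose1[OF simple_function_indicator])
  moreover have nn: "(\<integral>\<^sup>+ s. ennreal (norm (indicator A s *\<^sub>R v)) \<partial>M) = ennreal (norm v) * emeasure M A"
    using assms(1) by (subst nn_integral_cmult_indicator[symmetric])
      (auto intro!: nn_integral_cong split: split_indicator)
  ultimately show "L1 M (\<lambda>s. indicator A s *\<^sub>R v)"
    using assms(2) unfolding L1_def by (auto simp: strongly_measurable_simple_function ennreal_mult_less_top)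
  show "L1_norm M (\<lambda>s. indicator A s *\<^sub>R v) = norm v * measure M A"
    unfolding L1_norm_def nn by (simp add: enn2real_mult measure_def)
qed

section \<open>The derivative of the norm\<close>

text \<open>At 0 and at points where the norm is not differentiable the value is the zero functional,
  so that every norm_derivative x is linear of norm at most one.\<close>
definition norm_derivative :: "'b::real_normed_vector \<Rightarrow> 'b \<Rightarrow> real" where
  "norm_derivative x =
     (if x \<noteq> 0 \<and> norm differentiable (at x) then frechet_derivative norm (at x) else (\<lambda>_. 0))"

lemma frechet_smooth_normD:
  fixes x :: "'b::real_normed_vector"
  shows "frechet_smooth_norm TYPE('b) \<Longrightarrow> x \<noteq> 0 \<Longrightarrow> norm differentiable (at x)"
  unfolding frechet_smooth_norm_def differentiable_def by blast

lemma has_derivative_norm_derivative: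
  "x \<noteq> 0 \<Longrightarrow> norm differentiable (at x) \<Longrightarrow> (norm has_derivative norm_derivative x) (at x)"
  unfolding norm_derivative_def by (simp add: frechet_derivative_works[symmetric])

lemma norm_derivative_zero [simp]: "norm_derivative 0 = (\<lambda>_. 0)"
  unfolding norm_derivative_def by simp

lemma linear_norm_derivative: "linear (norm_derivative x)"
  unfolding norm_derivative_def by (simp add: linear_frechet_derivative linear_zero)

lemma abs_norm_difference_quotient_le:
  fixes x h :: "'b::real_normed_vector"
  shows "\<bar>real n * (norm (x + (1 / real n) *\<^sub>R h) - norm x)\<bar> \<le> norm h"
proof (cases "n = 0")
  case False
  have "\<bar>norm (x + (1 / real n) *\<^sub>R h) - norm x\<bar> \<le> norm h / real n"
    using norm_triangle_ineq3[of "x + (1 / real n) *\<^sub>R h" x] by simp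
  then have "real n * \<bar>norm (x + (1 / real n) *\<^sub>R h) - norm x\<bar> \<le> norm h"
    using False by (simp add: field_simps)
  then show ?thesis
    by (simp add: abs_mult)
qed simp

lemma norm_difference_quotient_tendsto:
  fixes x h :: "'b::real_normed_vector"
  assumes "x \<noteq> 0" and "norm differentiable (at x)"
  shows "(\<lambda>n. real n * (norm (x + (1 / real n) *\<^sub>R h) - norm x)) \<longlonglongrightarrow> norm_derivative x h"
proof -
  have "((\<lambda>t. x + t *\<^sub>R h) has_derivative (\<lambda>t. t *\<^sub>R h)) (at 0)"
    by (auto intro!: derivative_eq_intros)
  moreover have "(norm has_derivative norm_derivative x) (at (x + 0 *\<^sub>R h))"
    using has_derivative_norm_derivative[OF assms] by simp
  ultimately have
    "((\<lambda>t. norm (x + t *\<^sub>R h)) has_derivative (\<lambda>t. norm_derivative x (t *\<^sub>R h))) (at 0)"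
    by (rule has_derivative_compose)
  then have "((\<lambda>t. norm (x + t *\<^sub>R h)) has_field_derivative norm_derivative x h) (at 0)"
    by (simp add: has_field_derivative_def linear_scale[OF linear_norm_derivative] mult_commute_abs)
  then have lim: "((\<lambda>t. (norm (x + t *\<^sub>R h) - norm x) / t) \<longlongrightarrow> norm_derivative x h) (at 0)"
    by (simp add: has_field_derivative_iff)
  have "(\<lambda>n. 1 / real (Suc n)) \<longlonglongrightarrow> 0"
    using LIMSEQ_Suc[OF lim_const_over_n[of 1]] by simp
  then have "(\<lambda>n. (norm (x + (1 / real (Suc n)) *\<^sub>R h) - norm x) / (1 / real (Suc n)))
      \<longlonglongrightarrow> norm_derivative x h"
    using lim unfolding LIMSEQ_SEQ_conv[symmetric] by (elim allE[of _ "\<lambda>n. 1 / real (Suc n)"]) simp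
  then have "(\<lambda>n. real (Suc n) * (norm (x + (1 / real (Suc n)) *\<^sub>R h) - norm x))
      \<longlonglongrightarrow> norm_derivative x h"
    by (simp add: mult.commute)
  then show ?thesis
    by (rule LIMSEQ_imp_Suc)
qed

lemma abs_norm_derivative_le: "\<bar>norm_derivative x h\<bar> \<le> norm h"
proof (cases "x \<noteq> 0 \<and> norm differentiable (at x)")
  case True
  then show ?thesis
    using norm_difference_quotient_tendsto[of x h] abs_norm_difference_quotient_le[of _ x h]
    by (intro LIMSEQ_le_const2[OF tendsto_rabs]) auto
qed (auto simp: norm_derivative_def)

lemma norm_derivative_self:
  fixes x :: "'b::real_normed_vector"
  assumes "x \<noteq> 0" and "norm differentiable (at x)"
  shows "norm_derivative x x = norm x"
proof -
  have "eventually (\<lambda>n. real n * (norm (x + (1 / real n) *\<^sub>R x) - norm x) = norm x) sequentially"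
  proof (rule eventually_sequentiallyI)
    fix n :: nat assume "1 \<le> n"
    have "x + (1 / real n) *\<^sub>R x = (1 + 1 / real n) *\<^sub>R x"
      by (simp add: algebra_simps)
    then show "real n * (norm (x + (1 / real n) *\<^sub>R x) - norm x) = norm x"
      using \<open>1 \<le> n\<close> by (simp add: field_simps)
  qed
  then have "(\<lambda>n. real n * (norm (x + (1 / real n) *\<^sub>R x) - norm x)) \<longlonglongrightarrow> norm x"
    by (rule tendsto_eventually)
  then show ?thesis
    using norm_difference_quotient_tendsto[OF assms, of x] LIMSEQ_unique by blast
qed

lemma bounded_linear_norm_derivative: "bounded_linear (norm_derivative x)"
  using linear_norm_derivative[of x] abs_norm_derivative_le[of x]
  by (intro bounded_linear_intro[where K=1]) (auto simp: linear_add linear_scale)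

lemma borel_measurable_norm_derivative_const [measurable]:
  assumes "g \<in> borel_measurable M"
  shows "(\<lambda>s. norm_derivative x (g s)) \<in> borel_measurable M"
proof -
  have "norm_derivative x \<in> borel_measurable borel"
    by (intro borel_measurable_continuous_onI linear_continuous_on bounded_linear_norm_derivative)
  with assms show ?thesis
    by (rule measurable_compose)
qed

lemma borel_measurable_norm_derivative:
  fixes f g :: "'a \<Rightarrow> 'b::real_normed_vector"
  assumes "frechet_smooth_norm TYPE('b)" and "complete_measure M"
    and "strongly_measurable M f" and "strongly_measurable M g"
  shows "(\<lambda>s. norm_derivative (f s) (g s)) \<in> borel_measurable M"
proof (rule borel_measurable_LIMSEQ_real)
  have f [measurable]: "f \<in> borel_measurable M"
    using assms(2,3) by (rule borel_measurable_strongly_measurable)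
  have [measurable]: "(\<lambda>s. f s + (1 / real n) *\<^sub>R g s) \<in> borel_measurable M" for n
    using assms(2) strongly_measurable_add_scaleR[OF assms(3,4)]
    by (rule borel_measurable_strongly_measurable)
  show "(\<lambda>s. if f s = 0 then 0 else real n * (norm (f s + (1 / real n) *\<^sub>R g s) - norm (f s)))
      \<in> borel_measurable M" for n
  proof (rule measurable_If)
    show "{s \<in> space M. f s = 0} \<in> sets M"
      by measurable
  qed measurable
  show "(\<lambda>n. if f s = 0 then 0 else real n * (norm (f s + (1 / real n) *\<^sub>R g s) - norm (f s)))
      \<longlonglongrightarrow> norm_derivative (f s) (g s)" for s
    using norm_difference_quotient_tendsto[OF _ frechet_smooth_normD[OF assms(1)]]
    by (cases "f s = 0") auto
qed

section \<open>Support functionals in L1\<close>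

lemma L1_dual_diff:
  assumes "F \<in> L1_dual M" and "G \<in> L1_dual M"
  shows "(\<lambda>g. F g - G g) \<in> L1_dual M"
proof -
  obtain K1 K2 where K1: "\<And>g. L1 M g \<Longrightarrow> \<bar>F g\<bar> \<le> K1 * L1_norm M g"
    and K2: "\<And>g. L1 M g \<Longrightarrow> \<bar>G g\<bar> \<le> K2 * L1_norm M g"
    using assms unfolding L1_dual_def by blast
  have "\<bar>F g - G g\<bar> \<le> (K1 + K2) * L1_norm M g" if "L1 M g" for g
    using K1[OF that] K2[OF that] by (simp add: distrib_right)
  with assms show ?thesis
    unfolding L1_dual_def by (auto simp: algebra_simps intro!: exI[of _ "K1 + K2"])
qed

lemma abs_le_L1_dual_norm:
  assumes "F \<in> L1_dual M" and "L1 M g" and "L1_norm M g \<le> 1"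
  shows "\<bar>F g\<bar> \<le> L1_dual_norm M F"
proof -
  obtain K where K: "\<And>g. L1 M g \<Longrightarrow> \<bar>F g\<bar> \<le> K * L1_norm M g"
    using assms(1) unfolding L1_dual_def by blast
  have "\<bar>F h\<bar> \<le> \<bar>K\<bar>" if "L1 M h" and "L1_norm M h \<le> 1" for h
  proof -
    have "\<bar>F h\<bar> \<le> \<bar>K\<bar> * L1_norm M h"
      using K[OF that(1)] L1_norm_nonneg[of M h] by (smt (verit) mult_right_mono)
    also have "\<dots> \<le> \<bar>K\<bar>"
      using that(2) by (simp add: mult_left_le)
    finally show ?thesis .
  qed
  then have "bdd_above ((\<lambda>g. \<bar>F g\<bar>) ` {g. L1 M g \<and> L1_norm M g \<le> 1})"
    by (intro bdd_aboveI2[where M="\<bar>K\<bar>"]) auto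
  then show ?thesis
    unfolding L1_dual_norm_def using assms(2,3) by (intro cSUP_upper) auto
qed

lemma L1_unit_ball_nonempty: "{g. L1 M g \<and> L1_norm M g \<le> 1} \<noteq> {}"
  using L1_zero L1_norm_zero by (metis (mono_tags, lifting) empty_iff mem_Collect_eq zero_le_one)

lemma L1_dual_norm_le:
  assumes "\<And>g. L1 M g \<Longrightarrow> \<bar>F g\<bar> \<le> K * L1_norm M g" and "0 \<le> K"
  shows "L1_dual_norm M F \<le> K"
  unfolding L1_dual_norm_def
proof (rule cSUP_least)
  show "{g. L1 M g \<and> L1_norm M g \<le> 1} \<noteq> {}"
    by (rule L1_unit_ball_nonempty)
  show "\<bar>F g\<bar> \<le> K" if "g \<in> {g. L1 M g \<and> L1_norm M g \<le> 1}" for g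
    using assms(1)[of g] mult_left_le[of "L1_norm M g" K] that assms(2) by auto
qed

lemma support_functional_abs_le:
  fixes f g :: "'a \<Rightarrow> 'b::real_normed_vector"
  assumes "complete_measure M" and F: "F \<in> support_functionals M f" and "L1 M g"
  shows "\<bar>F g\<bar> \<le> L1_norm M g"
proof -
  have dual: "F \<in> L1_dual M" and norm_F: "L1_dual_norm M F = 1"
    using F unfolding support_functionals_def by auto
  obtain K where K: "\<And>g. L1 M g \<Longrightarrow> \<bar>F g\<bar> \<le> K * L1_norm M g"
    using dual unfolding L1_dual_def by blast
  show ?thesis
  proof (cases "L1_norm M g = 0")
    case True
    then show ?thesis
      using K[OF assms(3)] by simp
  next
    case False
    then have pos: "L1_norm M g > 0"
      using L1_norm_nonneg[of M g] by linarith
    let ?h = "\<lambda>s. (1 / L1_norm M g) *\<^sub>R g s"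
    have "\<bar>F ?h\<bar> \<le> 1"
      using abs_le_L1_dual_norm[OF dual L1_scaleR[OF assms(1,3)]] norm_F pos
      by (simp add: L1_norm_scaleR[OF assms(1,3)])
    moreover have "F ?h = F g / L1_norm M g"
      using dual assms(3) unfolding L1_dual_def by auto
    ultimately show ?thesis
      using pos by (simp add: divide_le_eq)
  qed
qed

lemma support_functionalsI:
  fixes f :: "'a \<Rightarrow> 'b::real_normed_vector"
  assumes "complete_measure M" and "L1 M f" and "L1_norm M f \<noteq> 0"
    and "F \<in> L1_dual M" and "\<And>g. L1 M g \<Longrightarrow> \<bar>F g\<bar> \<le> L1_norm M g" and "F f = L1_norm M f"
  shows "F \<in> support_functionals M f"
proof -
  have "L1_dual_norm M F \<le> 1"
    using assms(5) by (intro L1_dual_norm_le) auto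
  moreover have "1 \<le> L1_dual_norm M F"
  proof -
    have pos: "L1_norm M f > 0"
      using assms(3) L1_norm_nonneg[of M f] by linarith
    let ?g = "\<lambda>s. (1 / L1_norm M f) *\<^sub>R f s"
    have "F ?g = 1"
      using assms(2,4,6) pos unfolding L1_dual_def by auto
    moreover have "\<bar>F ?g\<bar> \<le> L1_dual_norm M F"
      using pos by (intro abs_le_L1_dual_norm[OF assms(4) L1_scaleR[OF assms(1,2)]])
        (simp add: L1_norm_scaleR[OF assms(1,2)])
    ultimately show ?thesis
      by simp
  qed
  ultimately show ?thesis
    using assms(4,6) unfolding support_functionals_def by simp
qed

lemma L1_dual_norm_diff_le_diam_J:
  fixes f :: "'a \<Rightarrow> 'b::real_normed_vector"
  assumes "complete_measure M"
    and "F \<in> support_functionals M f" and "G \<in> support_functionals M f"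
  shows "L1_dual_norm M (\<lambda>g. F g - G g) \<le> diam_J M f"
proof -
  have "L1_dual_norm M (\<lambda>g. F g - G g) \<le> 2"
    if "F \<in> support_functionals M f" and "G \<in> support_functionals M f" for F G
    using support_functional_abs_le[OF assms(1) that(1)] support_functional_abs_le[OF assms(1) that(2)]
    by (intro L1_dual_norm_le) (smt (verit))+
  then have bdd: "bdd_above ((\<lambda>(F, G). L1_dual_norm M (\<lambda>g. F g - G g)) `
      (support_functionals M f \<times> support_functionals M f))"
    by (intro bdd_aboveI2[where M=2]) auto
  have "(\<lambda>(F, G). L1_dual_norm M (\<lambda>g. F g - G g)) (F, G) \<le> diam_J M f"
    unfolding diam_J_def by (rule cSUP_upper[OF _ bdd]) (use assms(2,3) in simp)
  then show ?thesis
    by simp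
qed

lemma diam_J_eq_0:
  fixes f :: "'a \<Rightarrow> 'b::real_normed_vector"
  assumes "F \<in> support_functionals M f"
    and "\<And>G g. G \<in> support_functionals M f \<Longrightarrow> L1 M g \<Longrightarrow> G g = F g"
  shows "diam_J M f = 0"
proof -
  have zero: "L1_dual_norm M (\<lambda>g. G1 g - G2 g) = 0"
    if "G1 \<in> support_functionals M f" and "G2 \<in> support_functionals M f" for G1 G2
  proof -
    have "L1_dual_norm M (\<lambda>g. G1 g - G2 g) = (SUP g\<in>{g :: 'a \<Rightarrow> 'b. L1 M g \<and> L1_norm M g \<le> 1}. 0)"
      unfolding L1_dual_norm_def
      by (rule SUP_cong[OF refl]) (use assms(2)[OF that(1)] assms(2)[OF that(2)] in auto)
    also have "\<dots> = 0"
      using L1_unit_ball_nonempty by (rule cSUP_const)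
    finally show ?thesis .
  qed
  have "diam_J M f = (SUP _\<in>support_functionals M f \<times> support_functionals M f. 0)"
    unfolding diam_J_def by (rule SUP_cong[OF refl]) (auto simp: zero)
  also have "\<dots> = 0"
    using assms(1) by (intro cSUP_const) auto
  finally show ?thesis .
qed

definition integral_functional :: "'a measure \<Rightarrow> ('a \<Rightarrow> 'b \<Rightarrow> real) \<Rightarrow> ('a \<Rightarrow> 'b) \<Rightarrow> real" where
  "integral_functional M \<Phi> g = (\<integral>s. \<Phi> s (g s) \<partial>M)"

lemma
  fixes \<Phi> :: "'a \<Rightarrow> 'b::real_normed_vector \<Rightarrow> real"
  assumes "complete_measure M" and linear: "\<And>s. linear (\<Phi> s)"
    and bound: "\<And>s y. \<bar>\<Phi> s y\<bar> \<le> norm y"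
    and meas: "\<And>g. L1 M g \<Longrightarrow> (\<lambda>s. \<Phi> s (g s)) \<in> borel_measurable M"
  shows abs_integral_functional_le: "L1 M g \<Longrightarrow> \<bar>integral_functional M \<Phi> g\<bar> \<le> L1_norm M g"
    and integral_functional_L1_dual: "integral_functional M \<Phi> \<in> L1_dual M"
proof -
  have int: "integrable M (\<lambda>s. \<Phi> s (g s))" if "L1 M g" for g
    using integrable_norm_L1[OF assms(1) that] meas[OF that]
    by (rule Bochner_Integration.integrable_bound) (simp add: bound)
  show le: "\<bar>integral_functional M \<Phi> g\<bar> \<le> L1_norm M g" if "L1 M g" for g
  proof -
    have "\<bar>integral_functional M \<Phi> g\<bar> \<le> (\<integral>s. \<bar>\<Phi> s (g s)\<bar> \<partial>M)"
      unfolding integral_functional_def using integral_abs_bound by blast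
    also have "\<dots> \<le> (\<integral>s. norm (g s) \<partial>M)"
      using int[OF that] integrable_norm_L1[OF assms(1) that] bound
      by (intro integral_mono) auto
    finally show ?thesis
      using L1_norm_eq_integral[OF assms(1) that] by simp
  qed
  show "integral_functional M \<Phi> \<in> L1_dual M"
    unfolding L1_dual_def
  proof (intro CollectI conjI allI impI)
    fix g h :: "'a \<Rightarrow> 'b" assume "L1 M g" "L1 M h"
    then show "integral_functional M \<Phi> (\<lambda>s. g s + h s) =
        integral_functional M \<Phi> g + integral_functional M \<Phi> h"
      unfolding integral_functional_def using int
      by (simp add: linear_add[OF linear])
  next
    fix c and g :: "'a \<Rightarrow> 'b" assume "L1 M g"
    show "integral_functional M \<Phi> (\<lambda>s. c *\<^sub>R g s) = c * integral_functional M \<Phi> g"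
      unfolding integral_functional_def by (simp add: linear_scale[OF linear])
  qed (use le in \<open>auto intro!: exI[of _ 1]\<close>)
qed

section \<open>Support functionals built from the derivative of the norm\<close>

lemma norm_derivative_perturbation_support_functional:
  fixes f :: "'a \<Rightarrow> 'b::real_normed_vector" and x :: 'b
  assumes smooth: "frechet_smooth_norm TYPE('b)" and "complete_measure M"
    and "L1 M f" and "L1_norm M f \<noteq> 0"
    and [measurable]: "E \<in> sets M" and vanish: "\<And>s. s \<in> E \<Longrightarrow> f s = 0" and "\<bar>\<sigma>\<bar> \<le> 1"
  shows "integral_functional M (\<lambda>s y. norm_derivative (f s) y + \<sigma> * indicator E s * norm_derivative x y)
      \<in> support_functionals M f"
    (is "integral_functional M ?\<Phi> \<in> _")
proof -
  have linear: "linear (?\<Phi> s)" for s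
    unfolding linear_iff
    by (simp add: linear_add[OF linear_norm_derivative] linear_scale[OF linear_norm_derivative] algebra_simps)
  \<comment> \<open>On E the term D(f s) vanishes, so the bound survives the perturbation.\<close>
  have bound: "\<bar>?\<Phi> s y\<bar> \<le> norm y" for s y
  proof (cases "s \<in> E")
    case True
    then have "\<bar>?\<Phi> s y\<bar> = \<bar>\<sigma>\<bar> * \<bar>norm_derivative x y\<bar>"
      using vanish by (simp add: abs_mult)
    also have "\<dots> \<le> 1 * norm y"
      using assms(7) abs_norm_derivative_le by (intro mult_mono) auto
    finally show ?thesis
      by simp
  qed (simp add: abs_norm_derivative_le)
  have meas: "(\<lambda>s. ?\<Phi> s (g s)) \<in> borel_measurable M" if "L1 M g" for g
  proof -
    have [measurable]: "g \<in> borel_measurable M"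
      using assms(2) that unfolding L1_def by (blast intro: borel_measurable_strongly_measurable)
    have [measurable]: "(\<lambda>s. norm_derivative (f s) (g s)) \<in> borel_measurable M"
      using borel_measurable_norm_derivative[OF smooth assms(2)] assms(3) that
      unfolding L1_def by blast
    show ?thesis
      by measurable
  qed
  have self: "?\<Phi> s (f s) = norm (f s)" for s
    using vanish norm_derivative_self[OF _ frechet_smooth_normD[OF smooth]]
    by (cases "s \<in> E"; cases "f s = 0") (auto simp: linear_0[OF linear_norm_derivative])
  show ?thesis
    using integral_functional_L1_dual[OF assms(2) linear bound meas]
      abs_integral_functional_le[OF assms(2) linear bound meas]
    by (intro support_functionalsI[OF assms(2,3,4)])
       (auto simp: integral_functional_def self L1_norm_eq_integral[OF assms(2,3)])
qed

lemma support_functional_le_difference_quotient: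
  fixes f g :: "'a \<Rightarrow> 'b::real_normed_vector"
  assumes "complete_measure M" and F: "F \<in> support_functionals M f"
    and "L1 M f" and "L1 M g" and "0 < t"
  shows "F g \<le> (L1_norm M (\<lambda>s. f s + t *\<^sub>R g s) - L1_norm M f) / t"
proof -
  have dual: "F \<in> L1_dual M" and self: "F f = L1_norm M f"
    using F unfolding support_functionals_def by auto
  have "L1_norm M f + t * F g = F (\<lambda>s. f s + t *\<^sub>R g s)"
    using dual assms(3,4) L1_scaleR[OF assms(1,4)] self unfolding L1_dual_def by auto
  also have "\<dots> \<le> L1_norm M (\<lambda>s. f s + t *\<^sub>R g s)"
    using support_functional_abs_le[OF assms(1) F L1_add_scaleR[OF assms(1,3,4)]] by (rule abs_le_D1)
  finally show ?thesis
    using assms(5) by (simp add: field_simps)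
qed

lemma L1_norm_difference_quotient_tendsto:
  fixes f g :: "'a \<Rightarrow> 'b::real_normed_vector"
  assumes smooth: "frechet_smooth_norm TYPE('b)" and "complete_measure M"
    and "L1 M f" and "L1 M g" and nonzero: "AE s in M. f s \<noteq> 0"
  shows "(\<lambda>n. real n * (L1_norm M (\<lambda>s. f s + (1 / real n) *\<^sub>R g s) - L1_norm M f))
      \<longlonglongrightarrow> integral_functional M (\<lambda>s. norm_derivative (f s)) g"
proof -
  let ?q = "\<lambda>n s. real n * (norm (f s + (1 / real n) *\<^sub>R g s) - norm (f s))"
  have L1_n: "L1 M (\<lambda>s. f s + (1 / real n) *\<^sub>R g s)" for n
    using L1_add_scaleR[OF assms(2,3,4)] .
  have eq: "real n * (L1_norm M (\<lambda>s. f s + (1 / real n) *\<^sub>R g s) - L1_norm M f) = (\<integral>s. ?q n s \<partial>M)" for n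
  proof -
    have "L1_norm M (\<lambda>s. f s + (1 / real n) *\<^sub>R g s) - L1_norm M f =
        (\<integral>s. norm (f s + (1 / real n) *\<^sub>R g s) - norm (f s) \<partial>M)"
      using integrable_norm_L1[OF assms(2) L1_n] integrable_norm_L1[OF assms(2,3)]
      by (simp add: L1_norm_eq_integral[OF assms(2)] L1_n assms(3))
    then show ?thesis
      by simp
  qed
  have "(\<lambda>n. \<integral>s. ?q n s \<partial>M) \<longlonglongrightarrow> integral_functional M (\<lambda>s. norm_derivative (f s)) g"
    unfolding integral_functional_def
  proof (rule integral_dominated_convergence)
    show "(\<lambda>s. norm_derivative (f s) (g s)) \<in> borel_measurable M"
      using borel_measurable_norm_derivative[OF smooth assms(2)] assms(3,4) unfolding L1_def by blast
    have [measurable]: "(\<lambda>s. norm (f s + (1 / real n) *\<^sub>R g s)) \<in> borel_measurable M" for n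
      using integrable_norm_L1[OF assms(2) L1_n] by (rule borel_measurable_integrable)
    have [measurable]: "(\<lambda>s. norm (f s)) \<in> borel_measurable M"
      using integrable_norm_L1[OF assms(2,3)] by (rule borel_measurable_integrable)
    show "?q n \<in> borel_measurable M" for n
      by measurable
    show "integrable M (\<lambda>s. norm (g s))"
      using assms(2,4) by (rule integrable_norm_L1)
    show "AE s in M. (\<lambda>n. ?q n s) \<longlonglongrightarrow> norm_derivative (f s) (g s)"
      using nonzero
      by eventually_elim (rule norm_difference_quotient_tendsto[OF _ frechet_smooth_normD[OF smooth]])
    show "AE s in M. norm (?q n s) \<le> norm (g s)" for n
      using abs_norm_difference_quotient_le by auto
  qed
  then show ?thesis
    unfolding eq .
qed

lemma support_functional_eq_norm_derivative:
  fixes f g :: "'a \<Rightarrow> 'b::real_normed_vector"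
  assumes smooth: "frechet_smooth_norm TYPE('b)" and "complete_measure M"
    and "L1 M f" and nonzero: "AE s in M. f s \<noteq> 0"
    and F: "F \<in> support_functionals M f" and "L1 M g"
  shows "F g = integral_functional M (\<lambda>s. norm_derivative (f s)) g"
proof -
  \<comment> \<open>One-sided Gateaux bound; applying it to g and -g gives equality.\<close>
  have le: "F h \<le> integral_functional M (\<lambda>s. norm_derivative (f s)) h" if "L1 M h" for h
  proof (rule LIMSEQ_le_const[OF L1_norm_difference_quotient_tendsto[OF smooth assms(2,3) that nonzero]])
    have "F h \<le> real n * (L1_norm M (\<lambda>s. f s + (1 / real n) *\<^sub>R h s) - L1_norm M f)"
      if "n \<ge> 1" for n
      using support_functional_le_difference_quotient[OF assms(2) F assms(3) \<open>L1 M h\<close>, of "1 / real n"]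
        that by (simp add: mult.commute)
    then show "\<exists>N. \<forall>n\<ge>N. F h \<le> real n * (L1_norm M (\<lambda>s. f s + (1 / real n) *\<^sub>R h s) - L1_norm M f)"
      by blast
  qed
  have "L1 M (\<lambda>s. - g s)"
    using L1_scaleR[OF assms(2,6), of "-1"] by simp
  moreover have "F (\<lambda>s. (-1) *\<^sub>R g s) = (-1) * F g"
    using F assms(6) unfolding support_functionals_def L1_dual_def by blast
  moreover have "integral_functional M (\<lambda>s. norm_derivative (f s)) (\<lambda>s. - g s) =
      - integral_functional M (\<lambda>s. norm_derivative (f s)) g"
    unfolding integral_functional_def by (simp add: linear_neg[OF linear_norm_derivative])
  ultimately have "- F g \<le> - integral_functional M (\<lambda>s. norm_derivative (f s)) g"
    using le[of "\<lambda>s. - g s"] by simp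
  then show ?thesis
    using le[OF assms(6)] by linarith
qed

lemma diam_J_eq_0_if_AE_nonzero:
  fixes f :: "'a \<Rightarrow> 'b::real_normed_vector"
  assumes "frechet_smooth_norm TYPE('b)" and "complete_measure M"
    and "L1 M f" and "L1_norm M f \<noteq> 0" and "AE s in M. f s \<noteq> 0"
  shows "diam_J M f = 0"
proof (rule diam_J_eq_0)
  show "integral_functional M (\<lambda>s. norm_derivative (f s)) \<in> support_functionals M f"
    using norm_derivative_perturbation_support_functional[OF assms(1-4), of "{}" 0] by simp
  show "G g = integral_functional M (\<lambda>s. norm_derivative (f s)) g"
    if "G \<in> support_functionals M f" and "L1 M g" for G g
    using support_functional_eq_norm_derivative[OF assms(1,2,3,5) that] .
qed

lemma (in sigma_finite_measure) obtain_positive_finite_subset: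
  assumes "W \<in> sets M" and "0 < emeasure M W"
  obtains A where "A \<in> sets M" "A \<subseteq> W" "0 < emeasure M A" "emeasure M A < \<infinity>"
proof (cases "emeasure M W = \<infinity>")
  case True
  obtain A where "A \<in> sets M" "A \<subseteq> W" "emeasure M A < \<infinity>" "emeasure M A > ennreal 0"
    by (rule approx_PInf_emeasure_with_finite[OF assms(1) True])
  with that show ?thesis
    by simp
next
  case False
  with that assms show ?thesis
    by (simp add: less_top)
qed

lemma two_le_diam_J_if_zero_on_set:
  fixes f :: "'a \<Rightarrow> 'b::real_normed_vector"
  assumes smooth: "frechet_smooth_norm TYPE('b)" and "complete_measure M"
    and "L1 M f" and "L1_norm M f \<noteq> 0"
    and A: "A \<in> sets M" "0 < emeasure M A" "emeasure M A < \<infinity>" and vanish: "\<And>s. s \<in> A \<Longrightarrow> f s = 0"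
  shows "2 \<le> diam_J M f"
proof -
  have "f \<noteq> (\<lambda>s. 0)"
    using assms(4) L1_norm_zero by auto
  then obtain x :: 'b where x: "x \<noteq> 0"
    by auto
  define F where "F \<sigma> = integral_functional M
      (\<lambda>s y. norm_derivative (f s) y + \<sigma> * indicator A s * norm_derivative x y)" for \<sigma>
  have F_J: "F \<sigma> \<in> support_functionals M f" if "\<bar>\<sigma>\<bar> \<le> 1" for \<sigma>
    unfolding F_def using norm_derivative_perturbation_support_functional[OF assms(1-4) A(1) vanish that] .
  define m where "m = measure M A"
  have "emeasure M A = ennreal m"
    using A(3) unfolding m_def by (intro emeasure_eq_ennreal_measure) simp
  then have m: "0 < m"
    using A(2) by simp
  \<comment> \<open>A unit vector of L1 supported on A, on which F 1 and F (-1) differ by 2.\<close>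
  define v where "v = (1 / (norm x * m)) *\<^sub>R x"
  define g where "g s = indicator A s *\<^sub>R v" for s
  have L1_g: "L1 M g"
    unfolding g_def by (rule L1_indicator_scaleR[OF A(1,3)])
  have norm_g: "L1_norm M g = 1"
    unfolding g_def L1_norm_indicator_scaleR[OF A(1,3)] using x m by (simp add: v_def m_def)
  have F_g: "F \<sigma> g = \<sigma>" for \<sigma>
  proof -
    have "norm_derivative x v = 1 / m"
      using norm_derivative_self[OF x frechet_smooth_normD[OF smooth x]] x m
      unfolding v_def by (simp add: linear_scale[OF linear_norm_derivative])
    then have "F \<sigma> g = (\<integral>s. \<sigma> / m * indicator A s \<partial>M)"
      unfolding F_def integral_functional_def g_def
      by (intro Bochner_Integration.integral_cong)
         (auto simp: vanish linear_0[OF linear_norm_derivative] split: split_indicator)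
    also have "\<dots> = \<sigma>"
      using m A(1) sets.sets_into_space[OF A(1)] by (simp add: m_def Int_absorb2)
    finally show ?thesis .
  qed
  have "2 = \<bar>F 1 g - F (-1) g\<bar>"
    by (simp add: F_g)
  also have "\<dots> \<le> L1_dual_norm M (\<lambda>h. F 1 h - F (-1) h)"
    using F_J[of 1] F_J[of "-1"] L1_g norm_g unfolding support_functionals_def
    by (intro abs_le_L1_dual_norm L1_dual_diff) auto
  also have "\<dots> \<le> diam_J M f"
    using F_J by (intro L1_dual_norm_diff_le_diam_J[OF assms(2)]) auto
  finally show ?thesis .
qed

lemma two_le_diam_J_if_not_AE_nonzero:
  fixes f :: "'a \<Rightarrow> 'b::real_normed_vector"
  assumes "frechet_smooth_norm TYPE('b)" and "complete_measure M" and "sigma_finite_measure M"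
    and "L1 M f" and "L1_norm M f \<noteq> 0" and "\<not> (AE s in M. f s \<noteq> 0)"
  shows "2 \<le> diam_J M f"
proof -
  have [measurable]: "f \<in> borel_measurable M"
    using assms(2,4) unfolding L1_def by (blast intro: borel_measurable_strongly_measurable)
  define Z where "Z = {s \<in> space M. f s = 0}"
  have Z: "Z \<in> sets M"
    unfolding Z_def by measurable
  then have "0 < emeasure M Z"
    using AE_iff_measurable[OF Z, of "\<lambda>s. f s \<noteq> 0"] assms(6)
    by (simp add: Z_def zero_less_iff_neq_zero)
  then obtain A where "A \<in> sets M" "A \<subseteq> Z" "0 < emeasure M A" "emeasure M A < \<infinity>"
    by (rule sigma_finite_measure.obtain_positive_finite_subset[OF assms(3) Z])
  then show ?thesis
    by (intro two_le_diam_J_if_zero_on_set[OF assms(1,2,4,5)]) (auto simp: Z_def)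
qed

theorem corollary3p3:
  fixes M :: "'a measure" and f :: "'a \<Rightarrow> 'b::banach"
  assumes "complete_measure M"
    and "sigma_finite_measure M"
    and "frechet_smooth_norm TYPE('b)"
    and "L1 M f"
    and "L1_norm M f \<noteq> 0"
  shows "approx_smooth_L1 M f \<longleftrightarrow> (AE s in M. f s \<noteq> 0)"
proof
  assume "approx_smooth_L1 M f"
  then show "AE s in M. f s \<noteq> 0"
    using two_le_diam_J_if_not_AE_nonzero[OF assms(3,1,2,4,5)]
    unfolding approx_smooth_L1_def by fastforce
next
  assume "AE s in M. f s \<noteq> 0"
  then have "diam_J M f = 0"
    by (rule diam_J_eq_0_if_AE_nonzero[OF assms(3,1,4,5)])
  with assms(5) show "approx_smooth_L1 M f"
    unfolding approx_smooth_L1_def by simp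
qed

end
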